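(* For every $i\ge0$, the number $M_i$ of pairwise non-isomorphic diverging rooted trees of depth at most $i$ equals $T(i)$.
   Context: The tower function is $T(0)=1$, $T(i)=2^{T(i-1)}$. A rooted tree $T_v$ is a finite tree with a distinguished root $v$; isomorphisms of rooted trees must map root to root; its depth is the maximum distance from the root to a vertex. For a vertex $u$, the descendants of $u$ are the vertices whose path to the root passes through $u$ (including $u$); for a child $w$ of $u$ (a neighbor of $u$ farther from the root), the $u$-branch is the subtree spanned by the descendants of $w$, rooted at $w$. A rooted tree is diverging if for every vertex $u$ all its $u$-branches are pairwise non-isomorphic as rooted trees. *)

theory Defs
  imports Main
begin

fun tower :: "nat \<Rightarrow> nat" where
  "tower 0 = 1"
| "tower (Suc i) = 2 ^ tower i"

text \<open>The order of the list carries no meaning: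
  it is quotiented out by the rooted-tree isomorphism relation below.\<close>
datatype rtree = Node "rtree list"

inductive rtree_iso :: "rtree \<Rightarrow> rtree \<Rightarrow> bool" where
  "bij_betw \<sigma> {..<length ts} {..<length us} \<Longrightarrow>
   (\<forall>i<length ts. rtree_iso (ts ! i) (us ! \<sigma> i)) \<Longrightarrow>
   rtree_iso (Node ts) (Node us)"

fun depth :: "rtree \<Rightarrow> nat" where
  "depth (Node ts) = (if ts = [] then 0 else Suc (Max (set (map depth ts))))"

fun diverging :: "rtree \<Rightarrow> bool" where
  "diverging (Node ts) =
     ((\<forall>i<length ts. \<forall>j<length ts. i \<noteq> j \<longrightarrow> \<not> rtree_iso (ts ! i) (ts ! j))
      \<and> list_all diverging ts)"

definition M :: "nat \<Rightarrow> nat" where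
  "M i = card ({t. diverging t \<and> depth t \<le> i} // {(s, t). rtree_iso s t})"

end

theory Submission
  imports Defs "HOL-Library.Nat_Bijection" "HOL-Combinatorics.Permutations"
begin

text \<open>A rooted tree is encoded by Ackermann's coding of hereditarily finite sets: the code of
  a vertex is the sum of \<open>2 ^ c\<close> over the codes \<open>c\<close> of its branches. Isomorphic trees get
  equal codes. Conversely, at a vertex of a diverging tree the branches have pairwise distinct
  codes, so replacing the list of branches by the set of their codes loses nothing, and diverging
  trees with equal codes are isomorphic. Isomorphism classes of diverging trees of depth at most
  \<open>i\<close> are thus counted by their codes. A diverging tree of depth at most \<open>i + 1\<close> is a root
  above an arbitrary finite set of pairwise non-isomorphic diverging trees of depth at most \<open>i\<close>,
  so if the codes at level \<open>i\<close> are \<open>{..<T(i)}\<close>, those at level \<open>i + 1\<close> are the codes of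
  the subsets of \<open>{..<T(i)}\<close>, namely \<open>{..<2 ^ T(i)}\<close>.\<close>

lemma rtree_iso_refl: "rtree_iso t t"
proof (induction t)
  case (Node ts)
  then show ?case
    by (intro rtree_iso.intros[of id]) auto
qed

lemma rtree_iso_sym: "rtree_iso s t \<Longrightarrow> rtree_iso t s"
proof (induction rule: rtree_iso.induct)
  case (1 \<sigma> ts us)
  define \<tau> where "\<tau> = inv_into {..<length ts} \<sigma>"
  have bij: "bij_betw \<tau> {..<length us} {..<length ts}"
    unfolding \<tau>_def using 1(1) by (rule bij_betw_inv_into)
  have "rtree_iso (us ! j) (ts ! \<tau> j)" if j: "j < length us" for j
  proof -
    have "\<tau> j < length ts" using bij j by (auto simp: bij_betw_def)
    moreover have "\<sigma> (\<tau> j) = j"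
      unfolding \<tau>_def using 1(1) j by (auto simp: bij_betw_def intro!: f_inv_into_f)
    ultimately show ?thesis using 1(2) by metis
  qed
  with bij show ?case by (intro rtree_iso.intros) auto
qed

lemma rtree_iso_trans: "rtree_iso s t \<Longrightarrow> rtree_iso t u \<Longrightarrow> rtree_iso s u"
proof (induction s t arbitrary: u rule: rtree_iso.induct)
  case (1 \<sigma> ts us)
  from 1(3) obtain ws \<tau> where u: "u = Node ws"
    and bij: "bij_betw \<tau> {..<length us} {..<length ws}"
    and iso: "\<forall>j<length us. rtree_iso (us ! j) (ws ! \<tau> j)"
    by (cases rule: rtree_iso.cases) auto
  have "bij_betw (\<tau> \<circ> \<sigma>) {..<length ts} {..<length ws}"
    using 1(1) bij by (rule bij_betw_trans)
  moreover have "rtree_iso (ts ! i) (ws ! (\<tau> \<circ> \<sigma>) i)" if i: "i < length ts" for i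
  proof -
    have "\<sigma> i < length us" using 1(1) i by (auto simp: bij_betw_def)
    then show ?thesis using 1(2) i iso by auto
  qed
  ultimately show ?case unfolding u by (intro rtree_iso.intros) auto
qed

lemma equiv_rtree_iso: "equiv UNIV {(s, t). rtree_iso s t}"
  by (auto simp: equiv_def refl_on_def sym_def trans_def
      intro: rtree_iso_refl rtree_iso_sym rtree_iso_trans)

lemma card_quotient_eq_card_image:
  assumes "equiv B r" "A \<subseteq> B"
    and kernel: "\<And>x y. x \<in> A \<Longrightarrow> y \<in> A \<Longrightarrow> (x, y) \<in> r \<longleftrightarrow> f x = f y"
  shows "card (A // r) = card (f ` A)"
proof -
  let ?cls = "\<lambda>x. r `` {x}"
  have cls_eq: "?cls x = ?cls y \<longleftrightarrow> f x = f y" if "x \<in> A" "y \<in> A" for x y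
    using eq_equiv_class_iff[OF assms(1)] assms(2) kernel that by blast
  have "bij_betw (\<lambda>c. ?cls (inv_into A f c)) (f ` A) (?cls ` A)"
  proof (rule bij_betwI')
    fix c d assume "c \<in> f ` A" "d \<in> f ` A"
    then show "?cls (inv_into A f c) = ?cls (inv_into A f d) \<longleftrightarrow> c = d"
      by (simp add: cls_eq inv_into_into f_inv_into_f)
  next
    fix c assume "c \<in> f ` A"
    then show "?cls (inv_into A f c) \<in> ?cls ` A" by (simp add: inv_into_into)
  next
    fix X assume "X \<in> ?cls ` A"
    then obtain x where "x \<in> A" "X = ?cls x" by blast
    then show "\<exists>c\<in>f ` A. X = ?cls (inv_into A f c)"
      by (intro bexI[of _ "f x"]) (auto simp: cls_eq inv_into_into f_inv_into_f)
  qed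
  moreover have "A // r = ?cls ` A" by (auto simp: quotient_def)
  ultimately show ?thesis by (simp add: bij_betw_same_card)
qed

fun tree_code :: "rtree \<Rightarrow> nat" where
  "tree_code (Node ts) = set_encode (tree_code ` set ts)"

lemma rtree_iso_imp_tree_code_eq: "rtree_iso s t \<Longrightarrow> tree_code s = tree_code t"
proof (induction rule: rtree_iso.induct)
  case (1 \<sigma> ts us)
  have "tree_code ` set ts = (\<lambda>i. tree_code (ts ! i)) ` {..<length ts}"
    by (force simp: in_set_conv_nth)
  also have "\<dots> = (\<lambda>i. tree_code (us ! \<sigma> i)) ` {..<length ts}"
    using 1(2) by simp
  also have "\<dots> = (\<lambda>j. tree_code (us ! j)) ` \<sigma> ` {..<length ts}"
    by (simp add: image_image)
  also have "\<dots> = tree_code ` set us"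
    using 1(1) by (force simp: bij_betw_def in_set_conv_nth)
  finally show ?case by simp
qed

lemma depth_less_depth_Node: "t \<in> set ts \<Longrightarrow> depth t < depth (Node ts)"
  by (auto simp: le_imp_less_Suc)

lemma depth_Node_le_Suc_iff: "depth (Node ts) \<le> Suc i \<longleftrightarrow> (\<forall>t\<in>set ts. depth t \<le> i)"
  by auto

lemma rtree_iso_NodeI_by_key:
  assumes "distinct (map f ts)" "distinct (map f us)" "f ` set ts = f ` set us"
    and "\<And>t u. t \<in> set ts \<Longrightarrow> u \<in> set us \<Longrightarrow> f t = f u \<Longrightarrow> rtree_iso t u"
  shows "rtree_iso (Node ts) (Node us)"
proof -
  have "mset (map f ts) = mset (map f us)"
    using assms(1-3) set_eq_iff_mset_eq_distinct[of "map f ts" "map f us"] by simp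
  then obtain p where p: "p permutes {..<length us}" "permute_list p (map f us) = map f ts"
    by (metis length_map mset_eq_permutation)
  have len: "length ts = length us"
    using p(2) by (metis length_map length_permute_list)
  have "rtree_iso (ts ! i) (us ! p i)" if i: "i < length ts" for i
  proof -
    have pi: "p i < length us"
      using p(1) i len by (metis lessThan_iff permutes_in_image)
    have "map f ts ! i = permute_list p (map f us) ! i"
      by (simp add: p(2))
    also have "\<dots> = map f us ! p i"
      using p(1) i len by (simp add: permute_list_nth)
    finally have "f (ts ! i) = f (us ! p i)"
      using i pi by simp
    then show ?thesis using assms(4) i pi by simp
  qed
  moreover have "bij_betw p {..<length ts} {..<length us}"
    using p(1) len by (simp add: permutes_imp_bij)
  ultimately show ?thesis by (intro rtree_iso.intros) auto
qed

lemma distinct_tree_codes_if_diverging: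
  assumes "diverging (Node ts)"
    and "\<And>s t. s \<in> set ts \<Longrightarrow> t \<in> set ts \<Longrightarrow> tree_code s = tree_code t \<Longrightarrow> rtree_iso s t"
  shows "distinct (map tree_code ts)"
  using assms by (auto simp: distinct_conv_nth) (metis nth_mem)

lemma diverging_NodeI_distinct_tree_codes:
  assumes "list_all diverging ts" "distinct (map tree_code ts)"
  shows "diverging (Node ts)"
  using assms by (auto simp: distinct_conv_nth dest: rtree_iso_imp_tree_code_eq)

lemma tree_code_eq_imp_rtree_iso:
  "diverging s \<Longrightarrow> diverging t \<Longrightarrow> tree_code s = tree_code t \<Longrightarrow> rtree_iso s t"
  \<comment> \<open>Inducting on the larger depth gives the hypothesis for any two branches of \<open>s\<close> and
    \<open>t\<close>, in particular for two branches of \<open>t\<close>.\<close>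
proof (induction "max (depth s) (depth t)" arbitrary: s t rule: less_induct)
  case less
  obtain ts us where s: "s = Node ts" and t: "t = Node us"
    by (metis rtree.exhaust)
  have IH: "rtree_iso x y"
    if "x \<in> set ts \<union> set us" "y \<in> set ts \<union> set us" "tree_code x = tree_code y" for x y
  proof (rule less.hyps)
    show "max (depth x) (depth y) < max (depth s) (depth t)"
      using that(1,2) depth_less_depth_Node unfolding s t by fastforce
    show "diverging x" "diverging y"
      using that(1,2) less.prems(1,2) unfolding s t by (auto simp: list_all_iff)
  qed (fact that(3))
  have "tree_code ` set ts = tree_code ` set us"
    using less.prems(3) unfolding s t by (simp add: set_encode_eq)
  moreover have "distinct (map tree_code ts)" "distinct (map tree_code us)"
    using less.prems(1,2) IH unfolding s t by (auto intro!: distinct_tree_codes_if_diverging)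
  ultimately show ?case
    unfolding s t using IH by (intro rtree_iso_NodeI_by_key) auto
qed

lemma diverging_rtree_iso_iff_tree_code_eq:
  "diverging s \<Longrightarrow> diverging t \<Longrightarrow> rtree_iso s t \<longleftrightarrow> tree_code s = tree_code t"
  using rtree_iso_imp_tree_code_eq tree_code_eq_imp_rtree_iso by blast

definition diverging_trees :: "nat \<Rightarrow> rtree set" where
  "diverging_trees i = {t. diverging t \<and> depth t \<le> i}"

lemma set_encode_Pow_lessThan: "set_encode ` Pow {..<n} = {..<2 ^ n}"
proof
  have "set_encode S < 2 ^ n" if "S \<subseteq> {..<n}" for S
  proof -
    have "set_encode S \<le> set_encode {..<n}"
      unfolding set_encode_def using that by (intro sum_mono2) auto
    also have "\<dots> = 2 ^ n - 1"
      by (simp add: set_encode_def atLeast0LessThan[symmetric] sum_power2)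
    also have "\<dots> < 2 ^ n"
      by simp
    finally show ?thesis .
  qed
  then show "set_encode ` Pow {..<n} \<subseteq> {..<2 ^ n}"
    by auto
next
  show "{..<2 ^ n} \<subseteq> set_encode ` Pow {..<n}"
  proof
    fix m :: nat assume m: "m \<in> {..<2 ^ n}"
    have "set_decode m \<subseteq> {..<n}"
    proof
      fix k assume "k \<in> set_decode m"
      then have "m div 2 ^ k \<noteq> 0" by (auto simp: set_decode_def elim: oddE)
      then have "2 ^ k \<le> m" by (simp add: div_eq_0_iff not_less)
      with m have "(2::nat) ^ k < 2 ^ n" by (metis lessThan_iff le_less_trans)
      then show "k \<in> {..<n}" by simp
    qed
    then show "m \<in> set_encode ` Pow {..<n}"
      by (metis PowI image_eqI set_decode_inverse)
  qed
qed

lemma tree_code_diverging_trees_Suc: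
  "tree_code ` diverging_trees (Suc i) =
     set_encode ` {S. finite S \<and> S \<subseteq> tree_code ` diverging_trees i}"
proof (intro equalityI subsetI)
  fix c assume "c \<in> tree_code ` diverging_trees (Suc i)"
  then obtain ts where ts: "Node ts \<in> diverging_trees (Suc i)"
    and c: "c = set_encode (tree_code ` set ts)"
    by (metis imageE rtree.exhaust tree_code.simps)
  have "set ts \<subseteq> diverging_trees i"
    using ts by (auto simp: diverging_trees_def list_all_iff depth_Node_le_Suc_iff
        simp del: depth.simps)
  then show "c \<in> set_encode ` {S. finite S \<and> S \<subseteq> tree_code ` diverging_trees i}"
    unfolding c by blast
next
  fix c assume "c \<in> set_encode ` {S. finite S \<and> S \<subseteq> tree_code ` diverging_trees i}"
  then obtain S where S: "finite S" "S \<subseteq> tree_code ` diverging_trees i"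
    and c: "c = set_encode S"
    by blast
  then obtain U where U: "U \<subseteq> diverging_trees i" "inj_on tree_code U" "S = tree_code ` U"
    by (auto simp: subset_image_inj)
  have "finite U"
    using S(1) U(2,3) by (simp add: finite_image_iff)
  then obtain ts where ts: "set ts = U" "distinct ts"
    using finite_distinct_list by blast
  have "diverging (Node ts)"
    using ts U by (intro diverging_NodeI_distinct_tree_codes)
      (auto simp: diverging_trees_def list_all_iff distinct_map)
  moreover have "depth (Node ts) \<le> Suc i"
    using ts U by (auto simp: diverging_trees_def depth_Node_le_Suc_iff simp del: depth.simps)
  moreover have "c = tree_code (Node ts)"
    using c U(3) ts(1) by simp
  ultimately show "c \<in> tree_code ` diverging_trees (Suc i)"
    unfolding diverging_trees_def by blast
qed

lemma tree_code_diverging_trees: "tree_code ` diverging_trees i = {..<tower i}"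
proof (induction i)
  case 0
  have "diverging_trees 0 = {Node []}"
    by (auto simp: diverging_trees_def elim!: depth.elims split: if_splits)
  then show ?case by auto
next
  case (Suc i)
  have "{S. finite S \<and> S \<subseteq> {..<tower i}} = Pow {..<tower i}"
    using finite_subset by blast
  then show ?case
    using Suc.IH by (simp add: tree_code_diverging_trees_Suc set_encode_Pow_lessThan)
qed

theorem lemma6p10:
  fixes i :: nat
  shows "M i = tower i"
proof -
  have "M i = card (diverging_trees i // {(s, t). rtree_iso s t})"
    by (simp add: M_def diverging_trees_def)
  also have "\<dots> = card (tree_code ` diverging_trees i)"
    using equiv_rtree_iso
    by (rule card_quotient_eq_card_image)
      (auto simp: diverging_trees_def diverging_rtree_iso_iff_tree_code_eq)
  also have "\<dots> = tower i"
    by (simp add: tree_code_diverging_trees)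
  finally show ?thesis .
qed

end
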